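(* Fix $C_1,C_2$ with $C_2>0$, $C_1\le 0$ and $2C_1+C_2>0$, and fix $C_3\in(0,C_{3,crit})$. Then $\mathfrak L(C_1,C_2,C_3,b)$ is strictly increasing in $b$ on $(b_-(C_3),b_+(C_3))$.
   Context: Let real constants $C_1,C_2$ be given with $2C_1+C_2>0$, and let $C_{3,crit}=\frac1{27}(2C_1+C_2)^3$. For $C_3\in(0,C_{3,crit})$, let $\phi_1<\phi_2<\phi_3$ be the roots of $2(\phi-C_1)^2(\phi+\frac{C_2}2)=C_3$; they satisfy $-\frac{C_2}{2}<\phi_1<\frac{C_1-C_2}{3}<\phi_2<C_1<\phi_3$. Let $U(\phi)=-\frac12\phi^2-\frac12C_2\phi-\frac12C_1C_2-\frac{C_3}{2(\phi-C_1)}$. Set $b_-(C_3)=U(\phi_2)$ and $b_+(C_3)=U(\phi_1)$. For $b\in(b_-(C_3),b_+(C_3))$, let $\phi_-<\phi_+$ be the two solutions of $U(\phi)=b$ with $\phi_1<\phi_-<\phi_2<\phi_+<C_1$. Define $$\mathfrak L(C_1,C_2,C_3,b)=2\int_{\phi_-}^{\phi_+}\frac{d\phi}{\sqrt{2(b-U(\phi))}}.$$ This is the period of the periodic orbit of $\frac12\dot\phi^2+U(\phi)=b$, which describes travelling waves of the DGH equation. *)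

theory Defs
  imports "HOL-Analysis.Analysis"
begin

definition C3crit :: "real \<Rightarrow> real \<Rightarrow> real" where
  "C3crit C1 C2 = (2*C1 + C2)^3 / 27"

definition cubic_roots :: "real \<Rightarrow> real \<Rightarrow> real \<Rightarrow> real set" where
  "cubic_roots C1 C2 C3 = {phi. 2*(phi - C1)^2*(phi + C2/2) = C3}"

definition phi1 :: "real \<Rightarrow> real \<Rightarrow> real \<Rightarrow> real" where
  "phi1 C1 C2 C3 = Min (cubic_roots C1 C2 C3)"

definition phi2 :: "real \<Rightarrow> real \<Rightarrow> real \<Rightarrow> real" where
  "phi2 C1 C2 C3 = Min (cubic_roots C1 C2 C3 - {phi1 C1 C2 C3})"

definition U :: "real \<Rightarrow> real \<Rightarrow> real \<Rightarrow> real \<Rightarrow> real" where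
  "U C1 C2 C3 phi = - (1/2)*phi^2 - (1/2)*C2*phi - (1/2)*C1*C2 - C3 / (2*(phi - C1))"

definition b_minus :: "real \<Rightarrow> real \<Rightarrow> real \<Rightarrow> real" where
  "b_minus C1 C2 C3 = U C1 C2 C3 (phi2 C1 C2 C3)"

definition b_plus :: "real \<Rightarrow> real \<Rightarrow> real \<Rightarrow> real" where
  "b_plus C1 C2 C3 = U C1 C2 C3 (phi1 C1 C2 C3)"

text \<open>The turning points phi_- < phi_+ of the periodic orbit at energy b.\<close>
definition phi_minus :: "real \<Rightarrow> real \<Rightarrow> real \<Rightarrow> real \<Rightarrow> real" where
  "phi_minus C1 C2 C3 b =
     (THE phi. phi1 C1 C2 C3 < phi \<and> phi < phi2 C1 C2 C3 \<and> U C1 C2 C3 phi = b)"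

definition phi_plus :: "real \<Rightarrow> real \<Rightarrow> real \<Rightarrow> real \<Rightarrow> real" where
  "phi_plus C1 C2 C3 b =
     (THE phi. phi2 C1 C2 C3 < phi \<and> phi < C1 \<and> U C1 C2 C3 phi = b)"

text \<open>The period (an improper integral with integrable endpoint singularities;
  the integrand is nonnegative, so the Henstock-Kurzweil integral agrees with
  the Lebesgue one).\<close>
definition period_L :: "real \<Rightarrow> real \<Rightarrow> real \<Rightarrow> real \<Rightarrow> real" where
  "period_L C1 C2 C3 b =
     2 * integral {phi_minus C1 C2 C3 b .. phi_plus C1 C2 C3 b}
           (\<lambda>phi. 1 / sqrt (2 * (b - U C1 C2 C3 phi)))"

end

theory Submission
  imports Defs
begin

text \<open>Write \<open>\<psi> = C1 - \<phi>\<close>, \<open>a = C1 + C2/2\<close> and \<open>c = C3/2\<close>. Then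
  \<open>2 (b - U) = (\<psi> - p1) (p2 - \<psi>) (p3 - \<psi>) / \<psi>\<close>, where \<open>0 < p1 < p2 < p3\<close> are the roots
  of a cubic with \<open>p1 + p2 + p3 = 2a\<close>, \<open>p1 p2 p3 = 2c\<close> and a linear coefficient increasing in
  \<open>b\<close>, so that \<open>p3\<close> decreases as \<open>b\<close> increases. The turning points are \<open>\<psi> = p1, p2\<close>, and the
  substitution \<open>\<psi> = m - w cos t\<close>, with \<open>m\<close>, \<open>w\<close> the centre and half width of \<open>[p1, p2]\<close>,
  turns the half period into the proper integral over \<open>[0, \<pi>]\<close> of
  \<open>F\<^sub>q (m - w cos t)\<close>, where \<open>F\<^sub>q s = sqrt (s / (q - s))\<close> and \<open>q = p3\<close>.
  Both \<open>m\<close> and \<open>w\<close> are functions of \<open>q\<close>; symmetrising \<open>t \<mapsto> \<pi> - t\<close>, it suffices that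
  \<open>F\<^sub>q (m - w r) + F\<^sub>q (m + w r)\<close> strictly decreases in \<open>q\<close> for \<open>|r| \<le> 1\<close>. Its
  \<open>q\<close>-derivative is \<open>-(\<rho>\<^sub>x (x + q/2 - A) + \<rho>\<^sub>y (y + q/2 + A)) / 2\<close> with positive weights
  \<open>\<rho>\<close>, \<open>x = m - w r\<close>, \<open>y = m + w r\<close>; the bracket is affine in \<open>A\<close>, so its positivity only
  has to be checked at the two ends of the range of \<open>A\<close>.\<close>

lemma affine_weighted_sum_pos_between:
  fixes px py X Y A A0 A1 :: real
  assumes "A0 \<le> A" "A \<le> A1"
    and "px * (X - A0) + py * (Y + A0) > 0" "px * (X - A1) + py * (Y + A1) > 0"
  shows "px * (X - A) + py * (Y + A) > 0"
proof (cases "px \<le> py")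
  case True
  have "px * (X - A) + py * (Y + A) = px * (X - A0) + py * (Y + A0) + (A - A0) * (py - px)"
    by (simp add: algebra_simps)
  moreover have "(A - A0) * (py - px) \<ge> 0" using True assms(1) by simp
  ultimately show ?thesis using assms(3) by linarith
next
  case False
  have "px * (X - A) + py * (Y + A) = px * (X - A1) + py * (Y + A1) + (A1 - A) * (px - py)"
    by (simp add: algebra_simps)
  moreover have "(A1 - A) * (px - py) \<ge> 0" using False assms(2) by simp
  ultimately show ?thesis using assms(4) by linarith
qed

lemma weighted_sum_pos_at_upper_end:
  fixes q x y px py :: real
  assumes px: "px > 0" and py: "py > 0" and weights: "px * x < py * y"
    and xy: "0 < x" "x < y" "y < q"
  defines "A1 \<equiv> (q * (x + y) / 2 - x * y) / (y - x)"
  shows "px * (x + q/2 - A1) + py * (y + q/2 + A1) > 0"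
proof -
  have yx: "y - x > 0" using xy by simp
  have A1: "(y - x) * A1 = q * (x + y) / 2 - x * y" using yx by (simp add: A1_def)
  have "(y - x) * (px * (x + q/2 - A1) + py * (y + q/2 + A1))
     = px * ((y - x) * (x + q/2)) - px * ((y - x) * A1) + py * ((y - x) * (y + q/2)) + py * ((y - x) * A1)"
    by (simp add: algebra_simps)
  also have "\<dots> = (py * y) * (y - 2*x + q) - (px * x) * (q + x - 2*y)"
    unfolding A1 by (simp add: field_simps)
  finally have eq: "(y - x) * (px * (x + q/2 - A1) + py * (y + q/2 + A1))
      = (py * y) * (y - 2*x + q) - (px * x) * (q + x - 2*y)" .
  have "(px * x) * (q + x - 2*y) < (py * y) * (y - 2*x + q)"
  proof (cases "q + x - 2*y \<le> 0")
    case True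
    then have "(px * x) * (q + x - 2*y) \<le> 0" using px xy by (simp add: mult_nonneg_nonpos)
    moreover have "(py * y) * (y - 2*x + q) > 0" using py xy by simp
    ultimately show ?thesis by linarith
  next
    case False
    then have "(px * x) * (q + x - 2*y) < (py * y) * (q + x - 2*y)" using weights by simp
    also have "\<dots> \<le> (py * y) * (y - 2*x + q)" using py xy by (intro mult_left_mono) auto
    finally show ?thesis .
  qed
  then show ?thesis using eq yx by (metis diff_gt_0_iff_gt zero_less_mult_pos)
qed

definition root_ratio :: "real \<Rightarrow> real \<Rightarrow> real" where
  "root_ratio q s = sqrt (s / (q - s))"

definition root_ratio_weight :: "real \<Rightarrow> real \<Rightarrow> real" where
  "root_ratio_weight q s = 1 / ((q - s)^2 * sqrt (s / (q - s)))"

lemma root_ratio_weight_pos: "0 < s \<Longrightarrow> s < q \<Longrightarrow> root_ratio_weight q s > 0"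
  unfolding root_ratio_weight_def by simp

lemma root_ratio_weight_mult_self:
  assumes "0 < s" "s < q"
  shows "root_ratio_weight q s * s = root_ratio q s / (q - s)"
proof -
  define S where "S = sqrt (s / (q - s))"
  have S: "S > 0" "s = (q - s) * S^2" using assms by (simp_all add: S_def)
  have "root_ratio_weight q s * s = s / ((q - s)^2 * S)"
    unfolding root_ratio_weight_def S_def by simp
  also have "\<dots> = ((q - s) * S^2) / ((q - s)^2 * S)"
    using S(2) by simp
  also have "\<dots> = S / (q - s)"
    using S(1) assms by (subst frac_eq_eq) (auto simp: power2_eq_square)
  finally show ?thesis by (simp add: root_ratio_def S_def)
qed

lemma root_ratio_weight_mult_self_strict_mono:
  assumes "0 < x" "x < y" "y < q"
  shows "root_ratio_weight q x * x < root_ratio_weight q y * y"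
proof -
  have "x / (q - x) < y / (q - y)" using assms by (simp add: field_simps)
  then have "root_ratio q x < root_ratio q y" unfolding root_ratio_def by simp
  moreover have "1 / (q - x) < 1 / (q - y)" using assms by (simp add: field_simps)
  ultimately have "root_ratio q x * (1 / (q - x)) < root_ratio q y * (1 / (q - y))"
    using assms by (intro mult_strict_mono) (auto simp: root_ratio_def)
  then show ?thesis using assms by (simp add: root_ratio_weight_mult_self)
qed

lemma DERIV_root_ratio:
  assumes ds: "(s has_real_derivative ds) (at q)" and s: "0 < s q" "s q < q"
  shows "((\<lambda>q. root_ratio q (s q)) has_real_derivative (q * ds - s q) * root_ratio_weight q (s q) / 2) (at q)"
proof -
  have "s q / (q - s q) > 0" using s by simp
  have D: "((\<lambda>q. sqrt (s q / (q - s q))) has_real_derivative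
     inverse (sqrt (s q / (q - s q))) / 2 * ((ds * (q - s q) - s q * (1 - ds)) / (q - s q)^2)) (at q)"
    by (rule DERIV_chain2[where f=sqrt], rule DERIV_real_sqrt[OF \<open>s q / (q - s q) > 0\<close>])
      (use s in \<open>auto intro!: derivative_eq_intros ds simp: power2_eq_square\<close>)
  have E: "inverse (sqrt (s q / (q - s q))) / 2 * ((ds * (q - s q) - s q * (1 - ds)) / (q - s q)^2)
      = (q * ds - s q) * root_ratio_weight q (s q) / 2"
    unfolding root_ratio_weight_def by (simp add: field_simps)
  show ?thesis using D unfolding E root_ratio_def .
qed

lemma root_ratio_weight_combination_pos:
  fixes q m w r :: real
  assumes w: "0 < w" and r: "0 \<le> r" "r \<le> 1" and mw: "0 < m - w" "m + w < q"
  defines "A \<equiv> r * (m * q - m^2 + w^2) / (2 * w)"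
  shows "root_ratio_weight q (m - w * r) * ((m - w * r) + q/2 - A)
       + root_ratio_weight q (m + w * r) * ((m + w * r) + q/2 + A) > 0"
proof (cases "r = 0")
  case True
  then show ?thesis using mw w root_ratio_weight_pos[of m q] by (simp add: A_def)
next
  case False
  define x where "x = m - w * r"
  define y where "y = m + w * r"
  have wr: "0 < w * r" "w * r \<le> w" using w r False by (simp_all add: mult_le_cancel_left1)
  have xy: "0 < x" "x < y" "y < q" using wr mw unfolding x_def y_def by auto
  have px: "root_ratio_weight q x > 0" and py: "root_ratio_weight q y > 0"
    using xy root_ratio_weight_pos by auto
  define A0 where "A0 = w * r / 2"
  define A1 where "A1 = (q * (x + y) / 2 - x * y) / (y - x)"
  have mq: "m * q - m^2 \<ge> 0" using w mw by (simp add: power2_eq_square algebra_simps)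
  have A: "A = r * (m * q - m^2) / (2 * w) + w * r / 2"
    unfolding A_def using w by (simp add: field_simps power2_eq_square)
  have "A0 \<le> A" unfolding A0_def A using mq w r by simp
  moreover have "A \<le> A1"
  proof -
    have A1: "A1 = (m * q - m^2) / (2 * (w * r)) + w * r / 2"
      unfolding A1_def x_def y_def using wr w r False by (simp add: field_simps power2_eq_square)
    have "r * (m * q - m^2) / (2 * w) = (r * r) * ((m * q - m^2) / (2 * (w * r)))"
      using w False by (simp add: field_simps)
    also have "\<dots> \<le> (m * q - m^2) / (2 * (w * r))"
      using r mq wr by (intro mult_left_le_one_le) (auto simp: mult_le_one)
    finally show ?thesis unfolding A A1 by simp
  qed
  moreover have "root_ratio_weight q x * (x + q/2 - A0) + root_ratio_weight q y * (y + q/2 + A0) > 0"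
  proof -
    have "x + q/2 - A0 > 0" "y + q/2 + A0 > 0" unfolding x_def y_def A0_def using wr mw by linarith+
    then show ?thesis using px py by (simp add: add_pos_pos)
  qed
  moreover have "root_ratio_weight q x * (x + q/2 - A1) + root_ratio_weight q y * (y + q/2 + A1) > 0"
    unfolding A1_def
    by (rule weighted_sum_pos_at_upper_end[OF px py root_ratio_weight_mult_self_strict_mono[OF xy] xy])
  ultimately show ?thesis
    unfolding x_def[symmetric] y_def[symmetric] by (rule affine_weighted_sum_pos_between)
qed

text \<open>If \<open>p1 + p2 + q = 2 a\<close> and \<open>p1 p2 q = 2 c\<close>, then \<open>[p1, p2]\<close> has
  centre \<open>a - q/2\<close> and squared half width \<open>(a - q/2)\<^sup>2 - p1 p2\<close>.\<close>

definition centre :: "real \<Rightarrow> real \<Rightarrow> real" where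
  "centre a q = a - q/2"

definition half_width :: "real \<Rightarrow> real \<Rightarrow> real \<Rightarrow> real" where
  "half_width a c q = sqrt ((a - q/2)^2 - 2*c/q)"

definition admissible :: "real \<Rightarrow> real \<Rightarrow> real \<Rightarrow> bool" where
  "admissible a c q \<longleftrightarrow> 0 < q \<and> 2*c/q < (a - q/2)^2 \<and>
     0 < centre a q - half_width a c q \<and> centre a q + half_width a c q < q"

definition root_ratio_pair :: "real \<Rightarrow> real \<Rightarrow> real \<Rightarrow> real \<Rightarrow> real" where
  "root_ratio_pair a c r q =
     root_ratio q (centre a q - half_width a c q * r) + root_ratio q (centre a q + half_width a c q * r)"

lemma root_ratio_pair_minus: "root_ratio_pair a c (- r) q = root_ratio_pair a c r q"
  unfolding root_ratio_pair_def by simp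

lemma half_width_squared:
  "2*c/q \<le> (a - q/2)^2 \<Longrightarrow> (half_width a c q)^2 = (centre a q)^2 - 2*c/q"
  unfolding half_width_def centre_def by simp

lemma DERIV_half_width:
  assumes "0 < q" "2*c/q < (a - q/2)^2"
  shows "(half_width a c has_real_derivative (2*c/q^2 - (a - q/2)) / (2 * half_width a c q)) (at q)"
proof -
  have "((\<lambda>q. (a - q/2)^2 - 2*c/q) has_real_derivative 2*c/q^2 - (a - q/2)) (at q)"
    using assms by (auto intro!: derivative_eq_intros simp: power2_eq_square field_simps)
  from DERIV_chain2[where f=sqrt, OF DERIV_real_sqrt this]
  show ?thesis using assms unfolding half_width_def by (simp add: field_simps)
qed

lemma half_width_derivative_scaled:
  assumes q: "0 < q" and D: "2*c/q < (a - q/2)^2"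
  defines "m \<equiv> centre a q" and "w \<equiv> half_width a c q"
  shows "q * ((2*c/q^2 - (a - q/2)) / (2 * w)) = - (m * q - m^2 + w^2) / (2 * w)"
proof -
  have "q * (2*c/q^2) = m^2 - w^2"
    using q D half_width_squared[of c q a] unfolding m_def w_def by (simp add: power2_eq_square)
  then have "q * (2*c/q^2 - (a - q/2)) = - (m * q - m^2 + w^2)"
    unfolding m_def centre_def by (simp add: algebra_simps)
  then show ?thesis by (simp add: divide_simps)
qed

lemma DERIV_root_ratio_pair_neg:
  assumes adm: "admissible a c q" and r: "0 \<le> r" "r \<le> 1"
  shows "\<exists>d. (root_ratio_pair a c r has_real_derivative d) (at q) \<and> d < 0"
proof -
  define m where "m = centre a q"
  define w where "w = half_width a c q"
  define dw where "dw = (2*c/q^2 - (a - q/2)) / (2 * w)"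
  have q: "0 < q" and D: "2*c/q < (a - q/2)^2" and mw: "0 < m - w" "m + w < q"
    using adm unfolding admissible_def m_def w_def by auto
  have w: "w > 0" unfolding w_def half_width_def using D by simp
  have wr: "0 \<le> w * r" "w * r \<le> w" using w r by (simp_all add: mult_le_cancel_left1)
  define x where "x = m - w * r"
  define y where "y = m + w * r"
  have xy: "0 < x" "x < q" "0 < y" "y < q" using wr mw unfolding x_def y_def by auto
  have dw_eq: "q * dw = - (m * q - m^2 + w^2) / (2 * w)"
    unfolding dw_def m_def w_def by (rule half_width_derivative_scaled[OF q D])
  have dwq: "(half_width a c has_real_derivative dw) (at q)"
    unfolding dw_def w_def by (rule DERIV_half_width[OF q D])
  have "((\<lambda>q. centre a q - half_width a c q * r) has_real_derivative - 1/2 - dw * r) (at q)"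
       "((\<lambda>q. centre a q + half_width a c q * r) has_real_derivative - 1/2 + dw * r) (at q)"
    unfolding centre_def by (auto intro!: derivative_eq_intros dwq)
  from this[THEN DERIV_root_ratio]
  have "(root_ratio_pair a c r has_real_derivative
        (q * (- 1/2 - dw * r) - x) * root_ratio_weight q x / 2
      + (q * (- 1/2 + dw * r) - y) * root_ratio_weight q y / 2) (at q)"
    unfolding root_ratio_pair_def using xy unfolding x_def y_def m_def w_def
    by (auto intro!: derivative_eq_intros)
  moreover have "(q * (- 1/2 - dw * r) - x) * root_ratio_weight q x / 2
      + (q * (- 1/2 + dw * r) - y) * root_ratio_weight q y / 2 < 0"
  proof -
    define A where "A = - r * (q * dw)"
    have "A = r * (m * q - m^2 + w^2) / (2 * w)"
      unfolding A_def dw_eq by (simp add: algebra_simps)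
    then have pos: "root_ratio_weight q x * (x + q/2 - A) + root_ratio_weight q y * (y + q/2 + A) > 0"
      using root_ratio_weight_combination_pos[OF w r mw] unfolding x_def y_def by simp
    have eq: "(q * (- 1/2 - dw * r) - x) * root_ratio_weight q x / 2
        + (q * (- 1/2 + dw * r) - y) * root_ratio_weight q y / 2
      = - (root_ratio_weight q x * (x + q/2 - A) + root_ratio_weight q y * (y + q/2 + A)) / 2"
      unfolding A_def by (simp add: field_simps)
    show ?thesis unfolding eq using pos by simp
  qed
  ultimately show ?thesis by blast
qed

lemma admissible_iff:
  assumes q: "0 < q" and c: "0 < c"
  shows "admissible a c q \<longleftrightarrow>
    2*c < q * (a - q/2)^2 \<and> 0 < a - q/2 \<and> a < 3*q/2 \<and> 0 < q^2 * (q - a) + c"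
proof -
  let ?m = "a - q/2" and ?w = "half_width a c q"
  have D: "2*c/q < ?m^2 \<longleftrightarrow> 2*c < q * ?m^2" using q by (simp add: field_simps)
  have upper: "?w < q - ?m \<longleftrightarrow> 0 < q^2 * (q - a) + c" if "2*c/q < ?m^2" "0 < q - ?m"
  proof -
    have "0 \<le> ?w" unfolding half_width_def using that(1) by simp
    then have "?w < q - ?m \<longleftrightarrow> ?w^2 < (q - ?m)^2"
      using that by (auto intro: power_strict_mono power2_less_imp_less)
    also have "\<dots> \<longleftrightarrow> ?m^2 - 2*c/q < (q - ?m)^2"
      using that half_width_squared[of c q a] unfolding centre_def by simp
    also have "\<dots> \<longleftrightarrow> 0 < 2 * (q^2 * (q - a) + c) / q"
    proof -
      have "(q - ?m)^2 - (?m^2 - 2*c/q) = 2 * (q^2 * (q - a) + c) / q"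
        using q by (simp add: field_simps power2_eq_square)
      then show ?thesis by (metis diff_gt_0_iff_gt)
    qed
    also have "\<dots> \<longleftrightarrow> 0 < q^2 * (q - a) + c"
      using q by (simp add: zero_less_divide_iff del: distrib_left_numeral)
    finally show ?thesis .
  qed
  show ?thesis
  proof
    assume adm: "admissible a c q"
    then have D0: "2*c/q < ?m^2" and mw: "0 < ?m - ?w" "?m + ?w < q"
      unfolding admissible_def centre_def by auto
    have "0 < ?w" unfolding half_width_def using D0 by simp
    then show "2*c < q * ?m^2 \<and> 0 < ?m \<and> a < 3*q/2 \<and> 0 < q^2 * (q - a) + c"
      using D D0 mw upper by auto
  next
    assume h: "2*c < q * ?m^2 \<and> 0 < ?m \<and> a < 3*q/2 \<and> 0 < q^2 * (q - a) + c"
    then have D0: "2*c/q < ?m^2" using D by simp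
    have "?w^2 < ?m^2" using half_width_squared[of c q a] D0 c q unfolding centre_def by simp
    then have "?w < ?m" using h by (simp add: power_less_imp_less_base)
    then show "admissible a c q"
      unfolding admissible_def centre_def using q D0 h upper by auto
  qed
qed

lemma cubic_profile_antimono:
  fixes a q1 q2 :: real
  assumes "2*a/3 \<le> q1" "q1 \<le> q2" "q2 \<le> 2*a"
  shows "q2 * (a - q2/2)^2 \<le> q1 * (a - q1/2)^2"
proof (rule DERIV_nonpos_imp_nonincreasing[OF assms(2)])
  fix x assume x: "q1 \<le> x" "x \<le> q2"
  have "((\<lambda>q. q * (a - q/2)^2) has_real_derivative (a - x/2) * (a - 3*x/2)) (at x)"
    by (auto intro!: derivative_eq_intros simp: power2_eq_square field_simps)
  moreover have "(a - x/2) * (a - 3*x/2) \<le> 0"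
    using x assms by (intro mult_nonneg_nonpos) auto
  ultimately show "\<exists>y. ((\<lambda>q. q * (a - q/2)^2) has_real_derivative y) (at x) \<and> y \<le> 0"
    by blast
qed

lemma cubic_profile_mono:
  fixes a q1 q2 :: real
  assumes "2*a/3 \<le> q1" "q1 \<le> q2" "0 \<le> q1"
  shows "q1^2 * (q1 - a) \<le> q2^2 * (q2 - a)"
proof (rule DERIV_nonneg_imp_nondecreasing[OF assms(2)])
  fix x assume x: "q1 \<le> x" "x \<le> q2"
  have "((\<lambda>q. q^2 * (q - a)) has_real_derivative x * (3*x - 2*a)) (at x)"
    by (auto intro!: derivative_eq_intros simp: power2_eq_square algebra_simps)
  moreover have "x * (3*x - 2*a) \<ge> 0" using x assms by simp
  ultimately show "\<exists>y. ((\<lambda>q. q^2 * (q - a)) has_real_derivative y) (at x) \<and> y \<ge> 0"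
    by blast
qed

lemma admissible_between:
  assumes c: "0 < c" and adm: "admissible a c q1" "admissible a c q2" and q: "q1 \<le> q" "q \<le> q2"
  shows "admissible a c q"
proof -
  have q12: "0 < q1" "0 < q2" using adm unfolding admissible_def by simp_all
  note h1 = adm(1)[unfolded admissible_iff[OF q12(1) c]]
  note h2 = adm(2)[unfolded admissible_iff[OF q12(2) c]]
  have "q2 * (a - q2/2)^2 \<le> q * (a - q/2)^2" using cubic_profile_antimono[of a q q2] h1 h2 q by simp
  moreover have "q1^2 * (q1 - a) \<le> q^2 * (q - a)" using cubic_profile_mono[of a q1 q] h1 q q12 by simp
  ultimately show ?thesis using admissible_iff[of q c a] h1 h2 q q12 c by auto
qed

lemma root_ratio_pair_strict_antimono:
  assumes c: "0 < c" and adm: "admissible a c q1" "admissible a c q2" and "q1 < q2"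
    and r: "\<bar>r\<bar> \<le> 1"
  shows "root_ratio_pair a c r q2 < root_ratio_pair a c r q1"
proof -
  have "root_ratio_pair a c \<bar>r\<bar> q2 < root_ratio_pair a c \<bar>r\<bar> q1"
  proof (rule DERIV_neg_imp_decreasing[OF \<open>q1 < q2\<close>])
    fix q assume "q1 \<le> q" "q \<le> q2"
    then show "\<exists>d. (root_ratio_pair a c \<bar>r\<bar> has_real_derivative d) (at q) \<and> d < 0"
      using DERIV_root_ratio_pair_neg admissible_between[OF c adm] r by simp
  qed
  then show ?thesis by (cases "r \<ge> 0") (auto simp: root_ratio_pair_minus)
qed

definition root_triple :: "real \<Rightarrow> real \<Rightarrow> real \<Rightarrow> real \<Rightarrow> real \<Rightarrow> bool" where
  "root_triple a c p1 p2 p3 \<longleftrightarrow>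
     0 < p1 \<and> p1 < p2 \<and> p2 < p3 \<and> p1 + p2 + p3 = 2*a \<and> p1 * p2 * p3 = 2*c"

definition angular_integrand :: "real \<Rightarrow> real \<Rightarrow> real \<Rightarrow> real \<Rightarrow> real" where
  "angular_integrand p1 p2 p3 t = root_ratio p3 ((p1 + p2)/2 - (p2 - p1)/2 * cos t)"

lemma root_triple_half_width_squared:
  assumes "root_triple a c p1 p2 p3"
  shows "(a - p3/2)^2 - 2*c/p3 = ((p2 - p1)/2)^2"
proof -
  have am: "a - p3/2 = (p1 + p2)/2" and c: "2*c/p3 = p1 * p2"
    using assms unfolding root_triple_def by (auto simp: field_simps)
  show ?thesis unfolding am c by (simp add: field_simps power2_eq_square)
qed

lemma root_triple_centre_half_width:
  assumes "root_triple a c p1 p2 p3"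
  shows "centre a p3 = (p1 + p2)/2" "half_width a c p3 = (p2 - p1)/2"
  using assms root_triple_half_width_squared[OF assms]
  unfolding root_triple_def centre_def half_width_def by auto

lemma root_triple_admissible:
  assumes "root_triple a c p1 p2 p3"
  shows "admissible a c p3"
proof -
  have t: "0 < p1" "p1 < p2" "p2 < p3" using assms unfolding root_triple_def by auto
  then have "0 < ((p2 - p1)/2)^2" by simp
  then have "2*c/p3 < (a - p3/2)^2" using root_triple_half_width_squared[OF assms] by linarith
  with t show ?thesis
    unfolding admissible_def root_triple_centre_half_width[OF assms] by (simp add: field_simps)
qed

lemma continuous_on_angular_integrand:
  assumes "p1 \<le> p2" "p2 < p3"
  shows "continuous_on S (angular_integrand p1 p2 p3)"
proof -
  have "(p1 + p2)/2 - (p2 - p1)/2 * cos t \<le> p2" for t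
    using assms mult_left_mono[OF cos_ge_minus_one[of t], of "(p2 - p1)/2"] by (simp add: field_simps)
  then have "p3 - ((p1 + p2)/2 - (p2 - p1)/2 * cos t) \<noteq> 0" for t
    using assms(2) by (smt (verit))
  then show ?thesis unfolding angular_integrand_def[abs_def] root_ratio_def
    by (intro continuous_intros) auto
qed

lemma continuous_on_angular_integrand_reflect:
  assumes "p1 \<le> p2" "p2 < p3"
  shows "continuous_on S (\<lambda>t. angular_integrand p1 p2 p3 (pi - t))"
  by (rule continuous_on_compose2[OF continuous_on_angular_integrand[OF assms, of UNIV]])
    (auto intro!: continuous_intros)

lemma integral_reflect_pi:
  "integral {0..pi} (\<lambda>t. f (pi - t)) = integral {0..pi} f"
proof -
  have "integral {0..pi} (\<lambda>t. f (pi - t)) = integral {-pi..0} (\<lambda>s. f (pi + s))"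
    using Henstock_Kurzweil_Integration.integral_reflect_real[of 0 "-pi" "\<lambda>s. f (pi + s)"] by simp
  also have "\<dots> = integral {0..pi} f"
    using integral_shift_Icc_real[of "-pi" 0 f pi] by (simp add: o_def add.commute)
  finally show ?thesis .
qed

lemma angular_integrand_reflect_add:
  assumes "root_triple a c p1 p2 p3"
  shows "angular_integrand p1 p2 p3 t + angular_integrand p1 p2 p3 (pi - t) = root_ratio_pair a c (cos t) p3"
  unfolding angular_integrand_def root_ratio_pair_def root_triple_centre_half_width[OF assms] by simp

lemma integral_angular_integrand:
  assumes T: "root_triple a c p1 p2 p3"
  shows "2 * integral {0..pi} (angular_integrand p1 p2 p3) =
    integral {0..pi} (\<lambda>t. root_ratio_pair a c (cos t) p3)"
proof -
  have p: "p1 \<le> p2" "p2 < p3" using T unfolding root_triple_def by auto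
  have "angular_integrand p1 p2 p3 integrable_on {0..pi}"
    "(\<lambda>t. angular_integrand p1 p2 p3 (pi - t)) integrable_on {0..pi}"
    using continuous_on_angular_integrand[OF p] continuous_on_angular_integrand_reflect[OF p]
    by (auto intro: integrable_continuous_real)
  from integral_add[OF this] show ?thesis
    using integral_reflect_pi[of "angular_integrand p1 p2 p3"]
    by (simp add: angular_integrand_reflect_add[OF T])
qed

lemma continuous_on_root_ratio_pair_cos:
  assumes T: "root_triple a c p1 p2 p3"
  shows "continuous_on S (\<lambda>t. root_ratio_pair a c (cos t) p3)"
proof -
  have p: "p1 \<le> p2" "p2 < p3" using T unfolding root_triple_def by auto
  show ?thesis
    using continuous_on_add[OF continuous_on_angular_integrand[OF p] continuous_on_angular_integrand_reflect[OF p]]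
    by (simp add: angular_integrand_reflect_add[OF T])
qed

lemma angular_integral_strict_antimono:
  assumes c: "0 < c" and T: "root_triple a c p1 p2 p3" and T': "root_triple a c p1' p2' p3'"
    and "p3' < p3"
  shows "integral {0..pi} (angular_integrand p1 p2 p3) < integral {0..pi} (angular_integrand p1' p2' p3')"
proof -
  have "integral {0..pi} (\<lambda>t. root_ratio_pair a c (cos t) p3)
      < integral {0..pi} (\<lambda>t. root_ratio_pair a c (cos t) p3')"
  proof (rule integral_less_real)
    show "{0<..<pi} \<noteq> {}" by (simp add: not_le)
    fix t
    show "root_ratio_pair a c (cos t) p3 < root_ratio_pair a c (cos t) p3'"
      using root_ratio_pair_strict_antimono[OF c root_triple_admissible[OF T']
          root_triple_admissible[OF T] \<open>p3' < p3\<close>] abs_cos_le_one by blast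
  qed (auto intro: continuous_on_root_ratio_pair_cos[OF T] continuous_on_root_ratio_pair_cos[OF T'])
  then show ?thesis
    using integral_angular_integrand[OF T] integral_angular_integrand[OF T'] by simp
qed

lemma has_integral_arccos_substitution:
  fixes f g :: "real \<Rightarrow> real" and \<alpha> \<beta> :: real
  defines "u \<equiv> \<lambda>x. (2*x - \<alpha> - \<beta>) / (\<beta> - \<alpha>)"
  assumes "\<alpha> < \<beta>" and g: "continuous_on {0..pi} g"
    and f: "\<And>x. x \<in> {\<alpha><..<\<beta>} \<Longrightarrow> f x = g (arccos (u x)) / ((\<beta> - \<alpha>)/2 * sqrt (1 - (u x)^2))"
  shows "(f has_integral integral {0..pi} g) {\<alpha>..\<beta>}"
proof -
  define Phi where "Phi t = integral {0..t} g" for t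
  define G where "G x = - Phi (arccos (u x))" for x
  have dPhi: "(Phi has_real_derivative g t) (at t within {0..pi})" if "t \<in> {0..pi}" for t
    unfolding Phi_def[abs_def] by (rule integral_has_real_derivative[OF g that])
  have u_range: "-1 \<le> u x \<and> u x \<le> 1" if "x \<in> {\<alpha>..\<beta>}" for x
    using that \<open>\<alpha> < \<beta>\<close> unfolding u_def by (auto simp: field_simps)
  have "continuous_on {\<alpha>..\<beta>} (\<lambda>x. Phi (arccos (u x)))"
  proof (rule continuous_on_compose2[of "{0..pi}" Phi])
    show "continuous_on {0..pi} Phi"
      using dPhi DERIV_continuous continuous_on_eq_continuous_within by blast
    show "continuous_on {\<alpha>..\<beta>} (\<lambda>x. arccos (u x))"
      using u_range \<open>\<alpha> < \<beta>\<close> unfolding u_def by (auto intro!: continuous_intros)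
  qed (use u_range arccos_bounded in auto)
  then have cG: "continuous_on {\<alpha>..\<beta>} G" unfolding G_def by (intro continuous_intros)
  have dG: "(G has_real_derivative f x) (at x)" if x: "x \<in> {\<alpha><..<\<beta>}" for x
  proof -
    have u: "-1 < u x" "u x < 1" using x \<open>\<alpha> < \<beta>\<close> unfolding u_def by (auto simp: field_simps)
    then have t: "arccos (u x) \<in> {0<..<pi}" using arccos_lt_bounded by auto
    then have dPhi': "(Phi has_real_derivative g (arccos (u x))) (at (arccos (u x)))"
      using dPhi at_within_interior[of _ "{0..pi}"] by (metis greaterThanLessThan_subseteq_atLeastAtMost_iff
          interior_atLeastAtMost_real order_refl subsetD)
    have "(u has_real_derivative 2 / (\<beta> - \<alpha>)) (at x)"
      unfolding u_def using \<open>\<alpha> < \<beta>\<close> by (intro DERIV_cdivide) (auto intro!: derivative_eq_intros)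
    from DERIV_chain2[OF dPhi' DERIV_chain2[OF DERIV_arccos[OF u] this]]
    have "(G has_real_derivative
        - (g (arccos (u x)) * (inverse (- sqrt (1 - (u x)^2)) * (2 / (\<beta> - \<alpha>))))) (at x)"
      unfolding G_def[abs_def] by (rule DERIV_minus)
    moreover have "sqrt (1 - (u x)^2) > 0" using u by (simp add: abs_square_less_1)
    then have "- (g (arccos (u x)) * (inverse (- sqrt (1 - (u x)^2)) * (2 / (\<beta> - \<alpha>)))) = f x"
      using f[OF x] \<open>\<alpha> < \<beta>\<close> by (simp add: field_simps)
    ultimately show ?thesis by simp
  qed
  have "(f has_integral (G \<beta> - G \<alpha>)) {\<alpha>..\<beta>}"
    using fundamental_theorem_of_calculus_interior[OF less_imp_le[OF \<open>\<alpha> < \<beta>\<close>] cG] dG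
    by (simp add: has_real_derivative_iff_has_vector_derivative)
  moreover have "u \<beta> = 1" "u \<alpha> = -1" using \<open>\<alpha> < \<beta>\<close> unfolding u_def by (simp_all add: field_simps)
  ultimately show ?thesis unfolding G_def Phi_def by simp
qed

lemma angular_integrand_arccos:
  assumes p: "0 < p1" "p1 < \<psi>" "\<psi> < p2" "p2 < p3"
  defines "u \<equiv> (p1 + p2 - 2*\<psi>) / (p2 - p1)"
  shows "angular_integrand p1 p2 p3 (arccos u) / ((p2 - p1)/2 * sqrt (1 - u^2))
       = 1 / sqrt ((\<psi> - p1) * (p2 - \<psi>) * (p3 - \<psi>) / \<psi>)"
proof -
  have u: "\<bar>u\<bar> \<le> 1" and wu: "(p2 - p1)/2 * u = (p1 + p2)/2 - \<psi>"
    using p unfolding u_def by (auto simp: field_simps)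
  have "(p1 + p2)/2 - (p2 - p1)/2 * cos (arccos u) = \<psi>" using u wu by (simp add: field_simps)
  then have "angular_integrand p1 p2 p3 (arccos u) = sqrt (\<psi> / (p3 - \<psi>))"
    unfolding angular_integrand_def root_ratio_def by simp
  moreover have "(p2 - p1)/2 * sqrt (1 - u^2) = sqrt ((\<psi> - p1) * (p2 - \<psi>))"
  proof -
    have "((p2 - p1)/2)^2 * (1 - u^2) = ((p2 - p1)/2)^2 - ((p1 + p2)/2 - \<psi>)^2"
      unfolding wu[symmetric] by (simp add: power_mult_distrib right_diff_distrib power_divide)
    also have "\<dots> = (\<psi> - p1) * (p2 - \<psi>)" by (simp add: field_simps power2_eq_square)
    finally have "sqrt (((p2 - p1)/2)^2 * (1 - u^2)) = sqrt ((\<psi> - p1) * (p2 - \<psi>))" by simp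
    then show ?thesis using p by (simp add: real_sqrt_mult)
  qed
  moreover have "(\<psi> - p1) * (p2 - \<psi>) * (p3 - \<psi>) / \<psi> = ((\<psi> - p1) * (p2 - \<psi>)) / (\<psi> / (p3 - \<psi>))"
    using p by (simp add: field_simps)
  ultimately show ?thesis by (simp only:) (simp add: real_sqrt_divide real_sqrt_mult)
qed

lemma has_integral_period_integrand:
  assumes p: "0 < p1" "p1 < p2" "p2 < p3"
    and f: "\<And>x. x \<in> {C1 - p2<..<C1 - p1} \<Longrightarrow>
       f x = 1 / sqrt (((C1 - x) - p1) * (p2 - (C1 - x)) * (p3 - (C1 - x)) / (C1 - x))"
  shows "(f has_integral integral {0..pi} (angular_integrand p1 p2 p3)) {C1 - p2..C1 - p1}"
proof (rule has_integral_arccos_substitution)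
  show "C1 - p2 < C1 - p1" "continuous_on {0..pi} (angular_integrand p1 p2 p3)"
    using p by (auto intro: continuous_on_angular_integrand)
  fix x assume x: "x \<in> {C1 - p2<..<C1 - p1}"
  have u: "(2*x - (C1 - p2) - (C1 - p1)) / (p2 - p1) = (p1 + p2 - 2*(C1 - x)) / (p2 - p1)"
    and w: "C1 - p1 - (C1 - p2) = p2 - p1"
    by (simp_all add: algebra_simps)
  show "f x = angular_integrand p1 p2 p3 (arccos ((2*x - (C1 - p2) - (C1 - p1)) / (C1 - p1 - (C1 - p2))))
      / ((C1 - p1 - (C1 - p2))/2 * sqrt (1 - ((2*x - (C1 - p2) - (C1 - p1)) / (C1 - p1 - (C1 - p2)))^2))"
    unfolding w u f[OF x] by (rule angular_integrand_arccos[symmetric]) (use p x in auto)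
qed

lemma monic_cubic_factor:
  fixes A B C p1 p2 x :: real
  assumes "p1 \<noteq> p2" "p1^3 - A*p1^2 + B*p1 - C = 0" "p2^3 - A*p2^2 + B*p2 - C = 0"
  shows "x^3 - A*x^2 + B*x - C = (x - p1) * (x - p2) * (x - (A - p1 - p2))"
proof -
  have "(p1 - p2) * (p1^2 + p1*p2 + p2^2 - A*(p1 + p2) + B)
      = (p1^3 - A*p1^2 + B*p1 - C) - (p2^3 - A*p2^2 + B*p2 - C)"
    by (simp add: algebra_simps power2_eq_square power3_eq_cube)
  then have B: "B = A*(p1 + p2) - (p1^2 + p1*p2 + p2^2)" using assms by simp
  have "C = p1^3 - A*p1^2 + B*p1" using assms(2) by simp
  also have "\<dots> = p1 * p2 * (A - p1 - p2)" unfolding B by (simp add: algebra_simps power2_eq_square power3_eq_cube)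
  finally show ?thesis unfolding B by (simp add: algebra_simps power2_eq_square power3_eq_cube)
qed

definition effective_potential :: "real \<Rightarrow> real \<Rightarrow> real \<Rightarrow> real" where
  "effective_potential a c p = - (p^2)/2 + a * p + c / p"

lemma cubic_eq_effective_potential:
  "y \<noteq> 0 \<Longrightarrow> y^3 - 2*a*y^2 + 2*\<beta>*y - 2*c = 2 * y * (\<beta> - effective_potential a c y)"
  unfolding effective_potential_def by (simp add: field_simps power2_eq_square power3_eq_cube)

text \<open>The points with \<open>p\<^sup>2 (a - p) = c\<close> are the critical points of the effective potential.\<close>

lemma effective_potential_critical_points:
  fixes a c :: real
  assumes "0 < a" "0 < c" "27*c < 4*a^3"
  obtains pa pb where "0 < pa" "pa < pb" "pa^2 * (a - pa) = c" "pb^2 * (a - pb) = c"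
proof -
  define g where "g p = p^2 * (a - p)" for p :: real
  have cg: "continuous_on S g" for S unfolding g_def by (intro continuous_intros)
  have g: "g 0 = 0" "g a = 0" "c < g (2*a/3)"
    using assms unfolding g_def by (simp_all add: power2_eq_square power3_eq_cube field_simps)
  obtain pa where pa: "0 \<le> pa" "pa \<le> 2*a/3" "g pa = c"
    using IVT'[of g 0 c "2*a/3"] g assms cg by force
  obtain pb where pb: "2*a/3 \<le> pb" "pb \<le> a" "g pb = c"
    using IVT2'[of g a c "2*a/3"] g assms cg by force
  have "pa \<noteq> 0" using pa g assms by auto
  moreover have "pa \<noteq> 2*a/3" using pa(3) g(3) by (metis less_irrefl)
  ultimately have "0 < pa" "pa < pb" using pa pb by auto
  with pa(3) pb(3) show thesis unfolding g_def using that by blast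
qed

lemma root_triple_between:
  assumes c: "0 < c" and pab: "0 < pa" "pa < pb"
    and \<beta>: "effective_potential a c pa < \<beta>" "\<beta> < effective_potential a c pb"
  obtains p1 p2 p3 where "root_triple a c p1 p2 p3" "p1 < pa" "pa < p2" "p2 < pb" "pb < p3"
    "\<And>x. x^3 - 2*a*x^2 + 2*\<beta>*x - 2*c = (x - p1) * (x - p2) * (x - p3)"
proof -
  define P where "P x = x^3 - 2*a*x^2 + 2*\<beta>*x - 2*c" for x
  have cP: "continuous_on S P" for S unfolding P_def by (intro continuous_intros)
  have P: "P 0 < 0" "0 < P pa" "P pb < 0"
    using c pab \<beta> cubic_eq_effective_potential[of pa a \<beta> c] cubic_eq_effective_potential[of pb a \<beta> c]
    unfolding P_def by (auto simp: mult_pos_neg)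
  obtain p1 where p1: "0 \<le> p1" "p1 \<le> pa" "P p1 = 0"
    using IVT'[of P 0 0 pa] P pab cP by force
  obtain p2 where p2: "pa \<le> p2" "p2 \<le> pb" "P p2 = 0"
    using IVT2'[of P pb 0 pa] P pab cP by force
  have p12: "0 < p1" "p1 < pa" "pa < p2" "p2 < pb"
    using p1 p2 P by (auto simp: order.order_iff_strict)
  define p3 where "p3 = 2*a - p1 - p2"
  have fac: "P x = (x - p1) * (x - p2) * (x - p3)" for x
    unfolding P_def p3_def by (rule monic_cubic_factor) (use p1 p2 p12 in \<open>auto simp: P_def\<close>)
  have "pb < p3"
  proof (rule ccontr)
    assume "\<not> pb < p3"
    then have "0 \<le> (pb - p1) * (pb - p2) * (pb - p3)" using p12 by simp
    then show False using fac[of pb] P by simp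
  qed
  moreover have "p1 * p2 * p3 = 2*c" using fac[of 0] unfolding P_def by simp
  ultimately have "root_triple a c p1 p2 p3" using p12 unfolding root_triple_def p3_def by auto
  then show thesis using p12 \<open>pb < p3\<close> fac unfolding P_def by (intro that)
qed

lemma largest_root_strict_antimono:
  fixes A B B' C :: real
  assumes "\<And>x. x^3 - A*x^2 + B*x - C = (x - p1) * (x - p2) * (x - p3)"
    and "\<And>x. x^3 - A*x^2 + B'*x - C = (x - q1) * (x - q2) * (x - q3)"
    and "B < B'" "0 < p1" "p1 < p2" "p2 < p3"
  shows "q3 < p3"
proof (rule ccontr)
  assume "\<not> q3 < p3"
  then have "0 \<le> q3^3 - A*q3^2 + B*q3 - C" "0 < (B' - B) * q3"
    using assms(1)[of q3] assms(3-6) by simp_all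
  moreover have "q3^3 - A*q3^2 + B'*q3 - C = 0" using assms(2)[of q3] by simp
  ultimately show False by (simp add: algebra_simps)
qed

lemma U_eq_effective_potential:
  "x \<noteq> C1 \<Longrightarrow> U C1 C2 C3 x = effective_potential (C1 + C2/2) (C3/2) (C1 - x) - C1^2/2 - C1*C2"
  unfolding U_def effective_potential_def by (simp add: field_simps power2_eq_square)

lemma phi1_phi2_eq:
  assumes "2*C1 + C2 > 0" "0 < C3" "C3 < C3crit C1 C2"
  obtains pa pb where "0 < pa" "pa < pb" "phi1 C1 C2 C3 = C1 - pb" "phi2 C1 C2 C3 = C1 - pa"
proof -
  define a where "a = C1 + C2/2"
  define c where "c = C3/2"
  have a: "0 < a" and c: "0 < c" and "27*c < 4*a^3"
    using assms unfolding a_def c_def C3crit_def by (simp_all add: power3_eq_cube field_simps)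
  then obtain pa pb where p: "0 < pa" "pa < pb" "pa^2 * (a - pa) = c" "pb^2 * (a - pb) = c"
    by (rule effective_potential_critical_points)
  have fac: "\<psi>^3 - a*\<psi>^2 + 0*\<psi> - (-c) = (\<psi> - pa) * (\<psi> - pb) * (\<psi> - (a - pa - pb))" for \<psi>
    using p by (intro monic_cubic_factor) (auto simp: algebra_simps power2_eq_square power3_eq_cube)
  have "pa * pb * (a - pa - pb) = - c" using fac[of 0] by (simp add: algebra_simps)
  then have "pa * pb * (a - pa - pb) < 0" using c by simp
  then have pn: "a - pa - pb < 0" using p by (simp add: mult_less_0_iff)
  have roots: "cubic_roots C1 C2 C3 = {C1 - pa, C1 - pb, C1 - (a - pa - pb)}"
  proof -
    have "2*(x - C1)^2*(x + C2/2) - C3 = - 2 * ((C1 - x - pa) * (C1 - x - pb) * (C1 - x - (a - pa - pb)))"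
      for x
      unfolding fac[symmetric] by (simp add: a_def c_def power2_eq_square power3_eq_cube algebra_simps)
    then have "2*(x - C1)^2*(x + C2/2) = C3 \<longleftrightarrow> x \<in> {C1 - pa, C1 - pb, C1 - (a - pa - pb)}" for x
      by (smt (verit) insert_iff singletonD mult_eq_0_iff)
    then show ?thesis unfolding cubic_roots_def by auto
  qed
  have phi1: "phi1 C1 C2 C3 = C1 - pb"
    unfolding phi1_def roots using p pn by (intro Min_eqI) auto
  moreover have "phi2 C1 C2 C3 = C1 - pa"
    unfolding phi2_def phi1 roots using p pn by (intro Min_eqI) auto
  ultimately show thesis using p by (intro that)
qed

lemma energy_gap_eq:
  assumes fac: "\<And>y. y^3 - 2*(C1 + C2/2)*y^2 + 2*(b + C1^2/2 + C1*C2)*y - 2*(C3/2)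
      = (y - p1) * (y - p2) * (y - p3)"
    and "x \<noteq> C1"
  shows "2 * (b - U C1 C2 C3 x) = ((C1 - x) - p1) * (p2 - (C1 - x)) * (p3 - (C1 - x)) / (C1 - x)"
proof -
  define \<psi> where "\<psi> = C1 - x"
  have \<psi>: "\<psi> \<noteq> 0" using \<open>x \<noteq> C1\<close> by (simp add: \<psi>_def)
  have "2 * (b - U C1 C2 C3 x) = \<psi> * (2 * (b + C1^2/2 + C1*C2 - effective_potential (C1 + C2/2) (C3/2) \<psi>)) / \<psi>"
    unfolding U_eq_effective_potential[OF \<open>x \<noteq> C1\<close>] \<psi>_def[symmetric] using \<psi> by simp
  also have "\<dots> = (\<psi> - p1) * (\<psi> - p2) * (\<psi> - p3) / \<psi>"
    unfolding fac[symmetric] cubic_eq_effective_potential[OF \<psi>] by (simp only: ac_simps)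
  also have "\<dots> = (\<psi> - p1) * (p2 - \<psi>) * (p3 - \<psi>) / \<psi>"
    by (simp add: algebra_simps)
  finally show ?thesis unfolding \<psi>_def .
qed

lemma turning_points_eq:
  assumes fac: "\<And>y. y^3 - 2*(C1 + C2/2)*y^2 + 2*(b + C1^2/2 + C1*C2)*y - 2*(C3/2)
      = (y - p1) * (y - p2) * (y - p3)"
    and p: "0 < p1" "p1 < pa" "pa < p2" "p2 < pb" "pb < p3"
    and phi: "phi1 C1 C2 C3 = C1 - pb" "phi2 C1 C2 C3 = C1 - pa"
  shows "phi_minus C1 C2 C3 b = C1 - p2" "phi_plus C1 C2 C3 b = C1 - p1"
proof -
  have level: "U C1 C2 C3 x = b \<longleftrightarrow> x = C1 - p1 \<or> x = C1 - p2 \<or> x = C1 - p3" if "x \<noteq> C1" for x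
  proof -
    have "U C1 C2 C3 x = b \<longleftrightarrow> 2 * (b - U C1 C2 C3 x) = 0" by auto
    also have "\<dots> \<longleftrightarrow> x = C1 - p1 \<or> x = C1 - p2 \<or> x = C1 - p3"
      unfolding energy_gap_eq[OF fac that] using that by auto
    finally show ?thesis .
  qed
  show "phi_minus C1 C2 C3 b = C1 - p2"
    unfolding phi_minus_def phi
  proof (rule the_equality)
    show "C1 - pb < C1 - p2 \<and> C1 - p2 < C1 - pa \<and> U C1 C2 C3 (C1 - p2) = b"
      using p level[of "C1 - p2"] by auto
    show "y = C1 - p2" if "C1 - pb < y \<and> y < C1 - pa \<and> U C1 C2 C3 y = b" for y
      using that p level[of y] by auto
  qed
  show "phi_plus C1 C2 C3 b = C1 - p1"
    unfolding phi_plus_def phi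
  proof (rule the_equality)
    show "C1 - pa < C1 - p1 \<and> C1 - p1 < C1 \<and> U C1 C2 C3 (C1 - p1) = b"
      using p level[of "C1 - p1"] by auto
    show "y = C1 - p1" if "C1 - pa < y \<and> y < C1 \<and> U C1 C2 C3 y = b" for y
      using that p level[of y] by auto
  qed
qed

lemma period_L_eq_angular_integral:
  assumes "2*C1 + C2 > 0" "0 < C3" "C3 < C3crit C1 C2"
    and b: "b \<in> {b_minus C1 C2 C3 <..< b_plus C1 C2 C3}"
  obtains p1 p2 p3 where "root_triple (C1 + C2/2) (C3/2) p1 p2 p3"
    "\<And>x. x^3 - 2*(C1 + C2/2)*x^2 + 2*(b + C1^2/2 + C1*C2)*x - 2*(C3/2) = (x - p1) * (x - p2) * (x - p3)"
    "period_L C1 C2 C3 b = 2 * integral {0..pi} (angular_integrand p1 p2 p3)"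
proof -
  obtain pa pb where p: "0 < pa" "pa < pb" and phi: "phi1 C1 C2 C3 = C1 - pb" "phi2 C1 C2 C3 = C1 - pa"
    using phi1_phi2_eq[OF assms(1-3)] .
  have "0 < C3/2" using \<open>0 < C3\<close> by simp
  moreover have "effective_potential (C1 + C2/2) (C3/2) pa < b + C1^2/2 + C1*C2"
    "b + C1^2/2 + C1*C2 < effective_potential (C1 + C2/2) (C3/2) pb"
    using b p U_eq_effective_potential[of "C1 - pa" C1 C2 C3] U_eq_effective_potential[of "C1 - pb" C1 C2 C3]
    unfolding b_minus_def b_plus_def phi by auto
  ultimately obtain p1 p2 p3 where T: "root_triple (C1 + C2/2) (C3/2) p1 p2 p3"
      and P: "p1 < pa" "pa < p2" "p2 < pb" "pb < p3"
      and fac: "\<And>x. x^3 - 2*(C1 + C2/2)*x^2 + 2*(b + C1^2/2 + C1*C2)*x - 2*(C3/2)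
        = (x - p1) * (x - p2) * (x - p3)"
    using root_triple_between p by blast
  have p1: "0 < p1" "p1 < p2" "p2 < p3" using T unfolding root_triple_def by auto
  have "((\<lambda>x. 1 / sqrt (2 * (b - U C1 C2 C3 x))) has_integral
      integral {0..pi} (angular_integrand p1 p2 p3)) {C1 - p2..C1 - p1}"
  proof (rule has_integral_period_integrand[OF p1])
    fix x assume "x \<in> {C1 - p2<..<C1 - p1}"
    then have "x \<noteq> C1" using p1 by auto
    then show "1 / sqrt (2 * (b - U C1 C2 C3 x))
        = 1 / sqrt ((C1 - x - p1) * (p2 - (C1 - x)) * (p3 - (C1 - x)) / (C1 - x))"
      by (simp only: energy_gap_eq[OF fac \<open>x \<noteq> C1\<close>])
  qed
  then have "period_L C1 C2 C3 b = 2 * integral {0..pi} (angular_integrand p1 p2 p3)"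
    unfolding period_L_def turning_points_eq[OF fac p1(1) P phi] by (simp add: integral_unique)
  with T fac show thesis by (rule that)
qed

theorem lemma4:
  fixes C1 C2 C3 :: real
  assumes "C2 > 0" and "C1 \<le> 0" and "2*C1 + C2 > 0"
    and "0 < C3" and "C3 < C3crit C1 C2"
  shows "strict_mono_on {b_minus C1 C2 C3 <..< b_plus C1 C2 C3} (period_L C1 C2 C3)"
proof (rule strict_mono_onI)
  fix r s assume r: "r \<in> {b_minus C1 C2 C3 <..< b_plus C1 C2 C3}"
    and s: "s \<in> {b_minus C1 C2 C3 <..< b_plus C1 C2 C3}" and "r < s"
  obtain p1 p2 p3 where T: "root_triple (C1 + C2/2) (C3/2) p1 p2 p3"
    and Pr: "\<And>x. x^3 - 2*(C1 + C2/2)*x^2 + 2*(r + C1^2/2 + C1*C2)*x - 2*(C3/2) = (x - p1) * (x - p2) * (x - p3)"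
    and Lr: "period_L C1 C2 C3 r = 2 * integral {0..pi} (angular_integrand p1 p2 p3)"
    using period_L_eq_angular_integral[OF assms(3-5) r] by blast
  obtain q1 q2 q3 where T': "root_triple (C1 + C2/2) (C3/2) q1 q2 q3"
    and Ps: "\<And>x. x^3 - 2*(C1 + C2/2)*x^2 + 2*(s + C1^2/2 + C1*C2)*x - 2*(C3/2) = (x - q1) * (x - q2) * (x - q3)"
    and Ls: "period_L C1 C2 C3 s = 2 * integral {0..pi} (angular_integrand q1 q2 q3)"
    using period_L_eq_angular_integral[OF assms(3-5) s] by blast
  have "q3 < p3"
    using largest_root_strict_antimono[OF Pr Ps] \<open>r < s\<close> T unfolding root_triple_def by auto
  then show "period_L C1 C2 C3 r < period_L C1 C2 C3 s"
    unfolding Lr Ls using angular_integral_strict_antimono[OF _ T T'] \<open>0 < C3\<close> by simp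
qed

end
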